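(* Let $(h_k)_{k\ge1}$ be the Narayana sequence and let $\alpha$ be the real root of $x^3+x=1$. Then $\|\alpha h_k\|$ decreases exponentially as $k\to\infty$, i.e. there are constants $C>0$ and $0<\rho<1$ with $\|\alpha h_k\|\le C\rho^k$ for all $k$. The same holds with $\alpha$ replaced by any $\beta\in\mathbb{Z}[\alpha]$.
   Context: The Narayana sequence is defined by $h_1=1$, $h_2=2$, $h_3=3$ and $h_k=h_{k-1}+h_{k-3}$ for $k>3$. For real $x$, $\|x\|$ denotes the distance from $x$ to the nearest integer. *)

theory Defs
  imports Complex_Main
begin

text \<open>Narayana sequence h_1 = 1, h_2 = 2, h_3 = 3, h_k = h_(k-1) + h_(k-3) for k > 3.
  Only indices k >= 1 are meaningful; the value at 0 is an irrelevant filler.\<close>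
fun narayana :: "nat \<Rightarrow> int" where
  "narayana 0 = 0"
| "narayana (Suc 0) = 1"
| "narayana (Suc (Suc 0)) = 2"
| "narayana (Suc (Suc (Suc 0))) = 3"
| "narayana (Suc (Suc (Suc (Suc n)))) = narayana (Suc (Suc (Suc n))) + narayana (Suc n)"

definition dist_int :: "real \<Rightarrow> real" where
  "dist_int x = (INF m\<in>(\<int>::real set). \<bar>x - m\<bar>)"

definition nar_alpha :: real where
  "nar_alpha = (THE x::real. x ^ 3 + x = 1)"

text \<open>The ring Z[alpha] = {a + b alpha + c alpha^2 : a, b, c integers} (alpha has degree 3).\<close>
definition Z_alpha :: "real set" where
  "Z_alpha = {of_int a + of_int b * nar_alpha + of_int c * nar_alpha ^ 2 | a b c. True}"

end

theory Submission
  imports Defs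
begin

text \<open>Let \<open>\<psi> = 1/\<alpha>\<close>, the real root of \<open>x\<^sup>3 = x\<^sup>2 + 1\<close>, so that
  \<open>x\<^sup>3 - x\<^sup>2 - 1 = (x - \<psi>) (x\<^sup>2 + (\<psi> - 1) x + \<alpha>)\<close>. The defect
  \<open>d\<^sub>n = \<alpha> h\<^sub>n\<^sub>+\<^sub>2 - h\<^sub>n\<^sub>+\<^sub>1\<close> has no \<open>\<psi>\<close>-component, hence satisfies the recurrence of the
  quadratic factor, whose roots are complex of modulus \<open>\<surd>\<alpha> < 1\<close>. For a recurrence
  \<open>p u\<^sub>n\<^sub>+\<^sub>2 + q u\<^sub>n\<^sub>+\<^sub>1 + \<mu> p u\<^sub>n = 0\<close> with \<open>q\<^sup>2 < 4 \<mu> p\<^sup>2\<close> the positive definite form \<open>p u\<^sub>n\<^sub>+\<^sub>1\<^sup>2 + q u\<^sub>n\<^sub>+\<^sub>1 u\<^sub>n + \<mu> p u\<^sub>n\<^sup>2\<close> is multiplied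
  by \<open>\<mu>\<close> at each step, so \<open>|d\<^sub>n| = O(\<surd>\<alpha>\<^sup>n)\<close>. Finally, for \<open>\<beta> = a + b \<alpha> + c \<alpha>\<^sup>2\<close>
  the integer \<open>a h\<^sub>k + b h\<^sub>k\<^sub>-\<^sub>1 + c h\<^sub>k\<^sub>-\<^sub>2\<close> differs from \<open>\<beta> h\<^sub>k\<close> by a combination of
  \<open>d\<^sub>k\<^sub>-\<^sub>2\<close> and \<open>d\<^sub>k\<^sub>-\<^sub>3\<close>.\<close>

lemma cube_plus_strict_mono: "strict_mono (\<lambda>x::real. x ^ 3 + x)"
proof (rule strict_monoI)
  fix x y :: real
  assume "x < y"
  have "y ^ 3 + y - (x ^ 3 + x) = (y - x) * ((x + y / 2)\<^sup>2 + 3 / 4 * y\<^sup>2 + 1)"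
    by (simp add: algebra_simps power2_eq_square power3_eq_cube)
  moreover have "(y - x) * ((x + y / 2)\<^sup>2 + 3 / 4 * y\<^sup>2 + 1) > 0"
    using \<open>x < y\<close> by (intro mult_pos_pos) (auto intro: add_nonneg_pos)
  ultimately show "x ^ 3 + x < y ^ 3 + y" by linarith
qed

lemma nar_alpha_eqI:
  assumes "x ^ 3 + x = 1"
  shows "nar_alpha = x"
  unfolding nar_alpha_def
proof (rule the_equality)
  show "\<And>y. y ^ 3 + y = 1 \<Longrightarrow> y = x"
    using assms strict_mono_eq[OF cube_plus_strict_mono] by metis
qed (fact assms)

lemma nar_alpha_cubic: "nar_alpha ^ 3 + nar_alpha = 1"
proof -
  have "\<exists>x::real \<ge> 0. x \<le> 1 \<and> x ^ 3 + x = 1"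
    by (rule IVT'[of "\<lambda>x. x ^ 3 + x" 0 1 1]) (auto intro!: continuous_intros)
  then show ?thesis
    using nar_alpha_eqI by blast
qed

lemma nar_alpha_gt_half: "1 / 2 < nar_alpha"
  and nar_alpha_less_one: "nar_alpha < 1"
  using strict_mono_less[OF cube_plus_strict_mono, of "1 / 2" nar_alpha]
    strict_mono_less[OF cube_plus_strict_mono, of nar_alpha 1]
  by (simp_all add: nar_alpha_cubic power_divide)

lemma dist_int_le_abs_diff: "dist_int x \<le> \<bar>x - of_int m\<bar>"
  unfolding dist_int_def
  by (rule cINF_lower) (auto simp: bdd_below_def Ints_def intro!: exI[of _ 0])

lemma dist_int_le_one: "dist_int x \<le> 1"
  using dist_int_le_abs_diff[of x "\<lfloor>x\<rfloor>"] by linarith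

lemma geometric_bound_of_eventual_bound:
  fixes f :: "nat \<Rightarrow> real"
  assumes "0 < \<rho>" "\<rho> \<le> 1" "\<And>k. f k \<le> B" "\<And>k. k \<ge> N \<Longrightarrow> f k \<le> K * \<rho> ^ k"
  shows "\<exists>C>0. \<forall>k. f k \<le> C * \<rho> ^ k"
proof (intro exI[of _ "\<bar>K\<bar> + \<bar>B\<bar> / \<rho> ^ N + 1"] conjI allI)
  show "0 < \<bar>K\<bar> + \<bar>B\<bar> / \<rho> ^ N + 1"
    using assms(1) by (simp add: add_nonneg_pos)
  fix k
  have "0 < \<rho> ^ k"
    using assms(1) by simp
  show "f k \<le> (\<bar>K\<bar> + \<bar>B\<bar> / \<rho> ^ N + 1) * \<rho> ^ k"
  proof (cases "k \<ge> N")
    case True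
    then have "f k \<le> K * \<rho> ^ k"
      by (rule assms(4))
    also have "\<dots> \<le> \<bar>K\<bar> * \<rho> ^ k"
      using \<open>0 < \<rho> ^ k\<close> by (intro mult_right_mono) auto
    also have "\<dots> \<le> (\<bar>K\<bar> + \<bar>B\<bar> / \<rho> ^ N + 1) * \<rho> ^ k"
      using assms(1) \<open>0 < \<rho> ^ k\<close> by (intro mult_right_mono) auto
    finally show ?thesis .
  next
    case False
    have "\<rho> ^ N \<le> \<rho> ^ k"
      using False assms(1,2) by (intro power_decreasing) auto
    then have "\<bar>B\<bar> \<le> \<bar>B\<bar> / \<rho> ^ N * \<rho> ^ k"
      using assms(1) by (simp add: field_simps mult_left_mono)
    also have "\<dots> \<le> (\<bar>K\<bar> + \<bar>B\<bar> / \<rho> ^ N + 1) * \<rho> ^ k"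
      using \<open>0 < \<rho> ^ k\<close> by (intro mult_right_mono) auto
    finally show ?thesis
      using assms(3)[of k] by linarith
  qed
qed

lemma quadratic_form_recurrence_step:
  fixes u :: "nat \<Rightarrow> real"
  assumes "p * u (n + 2) + q * u (n + 1) + \<mu> * p * u n = 0"
  shows "p * u (n + 2) ^ 2 + q * u (n + 2) * u (n + 1) + \<mu> * p * u (n + 1) ^ 2
       = \<mu> * (p * u (n + 1) ^ 2 + q * u (n + 1) * u n + \<mu> * p * u n ^ 2)"
proof -
  have "p * u (n + 2) ^ 2 + q * u (n + 2) * u (n + 1) + \<mu> * p * u (n + 1) ^ 2
       - \<mu> * (p * u (n + 1) ^ 2 + q * u (n + 1) * u n + \<mu> * p * u n ^ 2)
     = (u (n + 2) - \<mu> * u n) * (p * u (n + 2) + q * u (n + 1) + \<mu> * p * u n)"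
    by (simp add: algebra_simps power2_eq_square)
  with assms show ?thesis
    by simp
qed

text \<open>The hypothesis \<open>q\<^sup>2 < 4 \<mu> p\<^sup>2\<close> says that the characteristic roots are complex,
  of modulus \<open>\<surd>\<mu>\<close>.\<close>

lemma second_order_recurrence_decay:
  fixes u :: "nat \<Rightarrow> real"
  assumes "p > 0" and discr: "q\<^sup>2 < 4 * \<mu> * p\<^sup>2"
    and rec: "\<And>n. p * u (n + 2) + q * u (n + 1) + \<mu> * p * u n = 0"
  shows "\<exists>K\<ge>0. \<forall>n. \<bar>u n\<bar> \<le> K * sqrt \<mu> ^ n"
proof -
  define Q where "Q n = p * u (n + 1) ^ 2 + q * u (n + 1) * u n + \<mu> * p * u n ^ 2" for n
  define D where "D = 4 * \<mu> * p\<^sup>2 - q\<^sup>2"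
  have "D > 0"
    using discr by (simp add: D_def)
  have Q_pow: "Q n = \<mu> ^ n * Q 0" for n
  proof (induction n)
    case (Suc n)
    then show ?case
      using quadratic_form_recurrence_step[OF rec, of n] by (simp add: Q_def)
  qed simp
  have definite: "D * u n ^ 2 \<le> 4 * p * Q n" for n
  proof -
    have "4 * p * Q n = (2 * p * u (n + 1) + q * u n)\<^sup>2 + D * u n ^ 2"
      by (simp add: Q_def D_def algebra_simps power2_eq_square)
    then show ?thesis
      by simp
  qed
  define K where "K = sqrt (4 * p * Q 0 / D)"
  have "0 \<le> D * u 0 ^ 2"
    using \<open>D > 0\<close> by simp
  then have "0 \<le> 4 * p * Q 0"
    using definite[of 0] by linarith
  then have "K \<ge> 0"
    using \<open>D > 0\<close> by (simp add: K_def)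
  have "\<bar>u n\<bar> \<le> K * sqrt \<mu> ^ n" for n
  proof -
    have "D * u n ^ 2 \<le> D * (4 * p * Q 0 / D * \<mu> ^ n)"
      using definite[of n] \<open>D > 0\<close> by (simp add: Q_pow[of n] mult_ac)
    then have "u n ^ 2 \<le> 4 * p * Q 0 / D * \<mu> ^ n"
      using \<open>D > 0\<close> by (rule mult_left_le_imp_le)
    then have "\<bar>u n\<bar> \<le> sqrt (4 * p * Q 0 / D * \<mu> ^ n)"
      by (metis real_sqrt_abs real_sqrt_le_mono)
    also have "\<dots> = K * sqrt \<mu> ^ n"
      unfolding K_def real_sqrt_mult real_sqrt_power ..
    finally show ?thesis .
  qed
  with \<open>K \<ge> 0\<close> show ?thesis
    by blast
qed

definition narayana_defect :: "nat \<Rightarrow> real" where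
  "narayana_defect n = nar_alpha * narayana (n + 2) - narayana (n + 1)"

lemma narayana_defect_recurrence:
  "nar_alpha * narayana_defect (n + 2) + (1 - nar_alpha) * narayana_defect (n + 1)
     + nar_alpha * nar_alpha * narayana_defect n = 0"
proof -
  have h: "narayana (n + 4) = narayana (n + 3) + narayana (n + 1)"
    by (simp add: numeral_eq_Suc)
  have "nar_alpha * narayana_defect (n + 2) + (1 - nar_alpha) * narayana_defect (n + 1)
          + nar_alpha * nar_alpha * narayana_defect n
      = nar_alpha\<^sup>2 * (narayana (n + 4) - narayana (n + 3) - narayana (n + 1))
          + (nar_alpha ^ 3 + nar_alpha - 1) * narayana (n + 2)"
    by (simp add: narayana_defect_def algebra_simps power2_eq_square power3_eq_cube
        numeral_eq_Suc)
  also have "\<dots> = 0"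
    using h nar_alpha_cubic by simp
  finally show ?thesis .
qed

lemma narayana_defect_decay: "\<exists>K\<ge>0. \<forall>n. \<bar>narayana_defect n\<bar> \<le> K * sqrt nar_alpha ^ n"
proof (rule second_order_recurrence_decay)
  show "0 < nar_alpha"
    using nar_alpha_gt_half by linarith
  have "(1 - nar_alpha)\<^sup>2 < (1 / 2)\<^sup>2" "(1 / 2) ^ 3 < nar_alpha ^ 3"
    using nar_alpha_gt_half nar_alpha_less_one by (intro power_strict_mono; simp)+
  then show "(1 - nar_alpha)\<^sup>2 < 4 * nar_alpha * nar_alpha\<^sup>2"
    by (simp add: power2_eq_square power3_eq_cube power_divide)
qed (fact narayana_defect_recurrence)

lemma Z_alpha_times_narayana_approx:
  assumes "\<beta> \<in> Z_alpha"
  shows "\<exists>B\<ge>0. \<forall>n. dist_int (\<beta> * narayana (n + 3))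
           \<le> B * (\<bar>narayana_defect (n + 1)\<bar> + \<bar>narayana_defect n\<bar>)"
proof -
  obtain a b c where \<beta>: "\<beta> = of_int a + of_int b * nar_alpha + of_int c * nar_alpha\<^sup>2"
    using assms unfolding Z_alpha_def by blast
  define B :: real where "B = \<bar>of_int b\<bar> + \<bar>of_int c\<bar>"
  have "\<bar>of_int c * nar_alpha\<bar> \<le> \<bar>of_int c :: real\<bar>"
    using nar_alpha_gt_half nar_alpha_less_one by (simp add: abs_mult mult_left_le)
  then have coeff: "\<bar>of_int b + of_int c * nar_alpha\<bar> \<le> B"
    using abs_triangle_ineq[of "of_int b" "of_int c * nar_alpha"] unfolding B_def by linarith
  have "dist_int (\<beta> * narayana (n + 3))
          \<le> B * (\<bar>narayana_defect (n + 1)\<bar> + \<bar>narayana_defect n\<bar>)" for n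
  proof -
    define d\<^sub>0 d\<^sub>1 where "d\<^sub>0 = narayana_defect n" and "d\<^sub>1 = narayana_defect (n + 1)"
    have d\<^sub>1: "d\<^sub>1 = nar_alpha * narayana (n + 3) - narayana (n + 2)"
      unfolding d\<^sub>1_def narayana_defect_def by (simp add: numeral_3_eq_3 numeral_2_eq_2)
    have "\<beta> * narayana (n + 3) - of_int (a * narayana (n + 3) + b * narayana (n + 2)
            + c * narayana (n + 1))
        = (of_int b + of_int c * nar_alpha) * d\<^sub>1 + of_int c * d\<^sub>0"
      unfolding d\<^sub>1 by (simp add: \<beta> d\<^sub>0_def narayana_defect_def algebra_simps power2_eq_square)
    then have "dist_int (\<beta> * narayana (n + 3))
        \<le> \<bar>(of_int b + of_int c * nar_alpha) * d\<^sub>1 + of_int c * d\<^sub>0\<bar>"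
      by (metis dist_int_le_abs_diff)
    also have "\<dots> \<le> \<bar>of_int b + of_int c * nar_alpha\<bar> * \<bar>d\<^sub>1\<bar> + \<bar>of_int c\<bar> * \<bar>d\<^sub>0\<bar>"
      by (metis abs_mult abs_triangle_ineq)
    also have "\<dots> \<le> B * \<bar>d\<^sub>1\<bar> + B * \<bar>d\<^sub>0\<bar>"
      using coeff by (intro add_mono mult_right_mono) (auto simp: B_def)
    finally show ?thesis
      by (simp add: d\<^sub>0_def d\<^sub>1_def distrib_left)
  qed
  moreover have "B \<ge> 0"
    by (simp add: B_def)
  ultimately show ?thesis
    by blast
qed

lemma Z_alpha_times_narayana_decay:
  assumes "\<beta> \<in> Z_alpha"
  shows "\<exists>C>0. \<forall>k. dist_int (\<beta> * narayana k) \<le> C * sqrt nar_alpha ^ k"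
proof -
  define \<rho> where "\<rho> = sqrt nar_alpha"
  have "0 < \<rho>" "\<rho> \<le> 1"
    using nar_alpha_gt_half nar_alpha_less_one by (auto simp: \<rho>_def)
  obtain K where "K \<ge> 0" and K: "\<And>n. \<bar>narayana_defect n\<bar> \<le> K * \<rho> ^ n"
    using narayana_defect_decay unfolding \<rho>_def by blast
  obtain B where "B \<ge> 0" and B: "\<And>n. dist_int (\<beta> * narayana (n + 3))
      \<le> B * (\<bar>narayana_defect (n + 1)\<bar> + \<bar>narayana_defect n\<bar>)"
    using Z_alpha_times_narayana_approx[OF assms] by blast
  have "dist_int (\<beta> * narayana k) \<le> 2 * B * K / \<rho> ^ 3 * \<rho> ^ k" if "k \<ge> 3" for k
  proof -
    obtain n where k: "k = n + 3"
      using \<open>k \<ge> 3\<close> by (metis le_add_diff_inverse2)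
    have "\<rho> ^ (n + 1) \<le> \<rho> ^ n"
      using \<open>0 < \<rho>\<close> \<open>\<rho> \<le> 1\<close> by (simp add: mult_left_le_one_le)
    then have "\<bar>narayana_defect (n + 1)\<bar> + \<bar>narayana_defect n\<bar> \<le> 2 * K * \<rho> ^ n"
      using K[of n] K[of "n + 1"] \<open>K \<ge> 0\<close> mult_left_mono[of _ _ K] by fastforce
    then have "dist_int (\<beta> * narayana k) \<le> B * (2 * K * \<rho> ^ n)"
      using B[of n] \<open>B \<ge> 0\<close> mult_left_mono unfolding k by fastforce
    also have "\<dots> = 2 * B * K / \<rho> ^ 3 * \<rho> ^ k"
      using \<open>0 < \<rho>\<close> by (simp add: k power_add)
    finally show ?thesis .
  qed
  from geometric_bound_of_eventual_bound[OF \<open>0 < \<rho>\<close> \<open>\<rho> \<le> 1\<close> dist_int_le_one this]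
  show ?thesis
    unfolding \<rho>_def .
qed

theorem mainTheorem3:
  shows "(\<exists>C::real. \<exists>\<rho>::real. C > 0 \<and> 0 < \<rho> \<and> \<rho> < 1 \<and>
            (\<forall>k\<ge>1. dist_int (nar_alpha * of_int (narayana k)) \<le> C * \<rho> ^ k))
       \<and> (\<forall>\<beta>\<in>Z_alpha. \<exists>C::real. \<exists>\<rho>::real. C > 0 \<and> 0 < \<rho> \<and> \<rho> < 1 \<and>
            (\<forall>k\<ge>1. dist_int (\<beta> * of_int (narayana k)) \<le> C * \<rho> ^ k))"
proof -
  have \<rho>: "0 < sqrt nar_alpha" "sqrt nar_alpha < 1"
    using nar_alpha_gt_half nar_alpha_less_one by auto
  have Z_alpha: "\<exists>C \<rho>. C > 0 \<and> 0 < \<rho> \<and> \<rho> < 1 \<and>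
      (\<forall>k\<ge>1. dist_int (\<beta> * of_int (narayana k)) \<le> C * \<rho> ^ k)" if "\<beta> \<in> Z_alpha" for \<beta>
    using Z_alpha_times_narayana_decay[OF that] \<rho> by blast
  have "nar_alpha \<in> Z_alpha"
    unfolding Z_alpha_def by (rule CollectI, rule exI[of _ 0], rule exI[of _ 1], rule exI[of _ 0]) simp
  then show ?thesis
    using Z_alpha by blast
qed

end
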